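(* Let $X$ be a finite-dimensional normed space and let $(A_n)_{n\in\mathbb N}$ be a nested (i.e. $A_{n+1}\subset A_n$) sequence of unbounded connected subsets of $X$. Then either $\bigcap_{n\in\mathbb N}A_n=\emptyset$, or $\bigcap_{n\in\mathbb N}A_n^\varepsilon$ is unbounded for every $\varepsilon>0$.
   Context: For a set $A\subset X$ and $\varepsilon>0$, $A^\varepsilon=\{x\in X:\mathrm{dist}(x,A)\le\varepsilon\}$. *)

theory Defs
  imports "HOL-Analysis.Analysis"
begin

definition thicken :: "'a::metric_space set \<Rightarrow> real \<Rightarrow> 'a set" where
  "thicken A e = {x. infdist x A \<le> e}"

end

theory Submission
  imports Defs
begin

text \<open>
  Fix a point \<open>x\<close> common to all \<open>A n\<close>. Each \<open>A n\<close> is connected, contains \<open>x\<close> and is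
  unbounded, so it meets every sphere around \<open>x\<close>. Spheres are compact in finite dimension
  (the coefficients of a basis expansion are bounded by a multiple of the norm), hence the
  nested sets \<open>closure (A n) \<inter> sphere x r\<close> have a common point. So \<open>\<Inter>n. closure (A n)\<close>
  meets every sphere around \<open>x\<close> and is unbounded; it is contained in every
  \<open>\<Inter>n. thicken (A n) e\<close>.
\<close>

definition coefficient_box :: "'a set \<Rightarrow> real \<Rightarrow> ('a \<Rightarrow> real) set" where
  "coefficient_box C M = PiE UNIV (\<lambda>v. if v \<in> C then {-M..M} else {0})"

lemma compact_coefficient_box: "compact (coefficient_box C M)"
proof -
  have "compactin (product_topology (\<lambda>_. euclidean) UNIV) (coefficient_box C M)"
    unfolding coefficient_box_def by (subst compactin_PiE) auto
  then show ?thesis by (simp add: euclidean_product_topology)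
qed

lemma mem_coefficient_box:
  "u \<in> coefficient_box C M \<longleftrightarrow> (\<forall>v. if v \<in> C then \<bar>u v\<bar> \<le> M else u v = 0)"
  by (auto simp: coefficient_box_def PiE_iff abs_le_iff)

lemma continuous_on_linear_combination:
  fixes C :: "'a::real_normed_vector set"
  shows "continuous_on S (\<lambda>u. \<Sum>v\<in>C. u v *\<^sub>R v)"
  by (intro continuous_on_sum continuous_on_scaleR continuous_on_const
      continuous_on_subset[OF continuous_on_product_coordinates] subset_UNIV)

text \<open>By independence the norm has a positive minimum on the compact set of coefficient
  vectors of \<open>l\<^sub>1\<close>-norm one.\<close>

lemma independent_norm_bounded_below:
  fixes C :: "'a::real_normed_vector set"
  assumes "finite C" "independent C"
  obtains m where "0 < m" "\<And>u. m * (\<Sum>v\<in>C. \<bar>u v\<bar>) \<le> norm (\<Sum>v\<in>C. u v *\<^sub>R v)"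
proof -
  define g where "g u = (\<Sum>v\<in>C. u v *\<^sub>R v)" for u :: "'a \<Rightarrow> real"
  define S where "S = coefficient_box C 1 \<inter> {u. (\<Sum>v\<in>C. \<bar>u v\<bar>) = 1}"
  have "compact S"
    unfolding S_def
    by (intro compact_Int_closed compact_coefficient_box closed_Collect_eq continuous_intros)
      (auto intro: continuous_on_product_coordinates)
  then have "closed (g ` S)"
    unfolding g_def by (intro compact_imp_closed compact_continuous_image continuous_on_linear_combination)
  moreover have "0 \<notin> g ` S"
  proof
    assume "0 \<in> g ` S"
    then obtain u where "u \<in> S" "g u = 0" by auto
    then have "\<forall>v\<in>C. u v = 0"
      using independentD[OF assms(2) assms(1) order_refl] by (simp add: g_def)
    with \<open>u \<in> S\<close> show False by (simp add: S_def)
  qed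
  ultimately obtain m where m: "0 < m" "ball 0 m \<subseteq> - g ` S"
    by (metis ComplI open_Compl open_contains_ball)
  have "m * (\<Sum>v\<in>C. \<bar>u v\<bar>) \<le> norm (g u)" for u
  proof (cases "(\<Sum>v\<in>C. \<bar>u v\<bar>) = 0")
    case False
    define s where "s = (\<Sum>v\<in>C. \<bar>u v\<bar>)"
    have "0 \<le> s" by (simp add: s_def sum_nonneg)
    with False have "0 < s" unfolding s_def by linarith
    define y where "y v = (if v \<in> C then u v / s else 0)" for v
    have "\<bar>u v\<bar> \<le> s" if "v \<in> C" for v
      unfolding s_def using assms(1) that by (intro member_le_sum) auto
    then have "y \<in> coefficient_box C 1"
      using \<open>0 < s\<close> by (simp add: mem_coefficient_box y_def abs_divide)
    moreover have "(\<Sum>v\<in>C. \<bar>y v\<bar>) = 1"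
      using \<open>0 < s\<close> by (simp add: y_def abs_divide flip: sum_divide_distrib s_def)
    ultimately have "y \<in> S" by (simp add: S_def)
    with m(2) have "m \<le> norm (g y)" by (force simp: dist_norm)
    moreover have "g y = (1 / s) *\<^sub>R g u"
      unfolding g_def y_def scaleR_sum_right by (intro sum.cong) auto
    ultimately show ?thesis
      using \<open>0 < s\<close> by (simp add: s_def field_simps)
  qed simp
  with m(1) that show thesis by (simp add: g_def)
qed

lemma cball_subset_image_coefficient_box:
  fixes C :: "'a::real_normed_vector set"
  assumes "finite C" "independent C" "span C = UNIV"
  obtains M where "cball 0 r \<subseteq> (\<lambda>u. \<Sum>v\<in>C. u v *\<^sub>R v) ` coefficient_box C M"
proof -
  obtain m where m: "0 < m" "\<And>u. m * (\<Sum>v\<in>C. \<bar>u v\<bar>) \<le> norm (\<Sum>v\<in>C. u v *\<^sub>R v)"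
    using independent_norm_bounded_below[OF assms(1,2)] by blast
  have "w \<in> (\<lambda>u. \<Sum>v\<in>C. u v *\<^sub>R v) ` coefficient_box C (r / m)" if "w \<in> cball 0 r" for w
  proof -
    have "w \<in> span C" by (simp add: assms(3))
    then obtain u where u: "(\<Sum>v\<in>C. u v *\<^sub>R v) = w"
      using span_finite[OF assms(1)] by auto
    define u' where "u' v = (if v \<in> C then u v else 0)" for v
    have w: "(\<Sum>v\<in>C. u' v *\<^sub>R v) = w"
      using u by (simp add: u'_def)
    have "\<bar>u' v\<bar> \<le> r / m" if "v \<in> C" for v
    proof -
      have "m * \<bar>u' v\<bar> \<le> m * (\<Sum>v\<in>C. \<bar>u' v\<bar>)"
        using m(1) assms(1) that by (intro mult_left_mono member_le_sum) auto
      also have "\<dots> \<le> norm w" using m(2)[of u'] w by simp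
      also have "\<dots> \<le> r" using \<open>w \<in> cball 0 r\<close> by simp
      finally show ?thesis using m(1) by (simp add: pos_le_divide_eq mult.commute)
    qed
    then have "u' \<in> coefficient_box C (r / m)"
      by (simp add: mem_coefficient_box u'_def)
    with w show ?thesis by blast
  qed
  then show thesis using that by blast
qed

lemma compact_cball_finite_span:
  fixes B :: "'a::real_normed_vector set" and x :: 'a
  assumes "finite B" "span B = UNIV"
  shows "compact (cball x r)"
proof -
  obtain C where C: "C \<subseteq> B" "independent C" "B \<subseteq> span C"
    using maximal_independent_subset[of B] by blast
  have "finite C" using C(1) assms(1) finite_subset by blast
  have "span C = UNIV"
    using assms(2) C(3) by (metis span_minimal subspace_span top.extremum_uniqueI)
  define g where "g u = (\<Sum>v\<in>C. u v *\<^sub>R v)" for u :: "'a \<Rightarrow> real"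
  obtain M where M: "cball 0 r \<subseteq> g ` coefficient_box C M"
    using cball_subset_image_coefficient_box[OF \<open>finite C\<close> C(2) \<open>span C = UNIV\<close>]
    unfolding g_def by blast
  have "compact (g ` coefficient_box C M)"
    unfolding g_def by (rule compact_continuous_image[OF continuous_on_linear_combination compact_coefficient_box])
  then have "compact (g ` coefficient_box C M \<inter> cball 0 r)"
    by (rule compact_Int_closed) simp
  also have "g ` coefficient_box C M \<inter> cball 0 r = cball 0 r"
    using M by blast
  finally have "compact (cball (0::'a) r)" .
  then show ?thesis
    using compact_translation[of "cball 0 r" x] cball_translation[of x 0 r] by simp
qed

lemma connected_unbounded_meets_sphere:
  fixes S :: "'a::metric_space set"
  assumes "connected S" "\<not> bounded S" "x \<in> S" "0 \<le> r"
  shows "S \<inter> sphere x r \<noteq> {}"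
proof -
  obtain z where "z \<in> S" "z \<notin> cball x r"
    using assms(2) bounded_cball bounded_subset[of "cball x r" S] by blast
  then have z: "z \<in> S" "r < dist x z" by auto
  have "connected (dist x ` S)"
    using assms(1) by (intro connected_continuous_image continuous_intros)
  moreover have "0 \<in> dist x ` S" "dist x z \<in> dist x ` S"
    using assms(3) z(1) by force+
  ultimately have "r \<in> dist x ` S"
    using assms(4) z(2) unfolding connected_iff_interval by (meson less_imp_le)
  then show ?thesis by auto
qed

lemma compact_meets_Inter_closure_decseq:
  fixes A :: "nat \<Rightarrow> 'a::topological_space set"
  assumes "compact K" "decseq A" "\<And>n. A n \<inter> K \<noteq> {}"
  shows "K \<inter> (\<Inter>n. closure (A n)) \<noteq> {}"
proof -
  have "K \<inter> \<Inter>F \<noteq> {}" if F: "finite F" "F \<subseteq> range (\<lambda>n. closure (A n))" for F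
  proof -
    obtain N where N: "finite N" "F = (\<lambda>n. closure (A n)) ` N"
      using finite_subset_image[OF F] by blast
    define m where "m = Max (insert 0 N)"
    have "A m \<subseteq> closure (A n)" if "n \<in> N" for n
    proof -
      have "n \<le> m" using N(1) that by (simp add: m_def)
      then show ?thesis using assms(2) closure_subset by (metis decseqD subset_trans)
    qed
    then have "A m \<subseteq> \<Inter>F" using N(2) by blast
    then show ?thesis using assms(3)[of m] by blast
  qed
  then show ?thesis
    using compact_imp_fip[OF assms(1), of "range (\<lambda>n. closure (A n))"] by auto
qed

lemma unbounded_Inter_closure_nested_connected:
  fixes A :: "nat \<Rightarrow> 'a::metric_space set"
  assumes compact_cball: "\<And>r. compact (cball x r)"
    and "decseq A" "\<And>n. connected (A n)" "\<And>n. \<not> bounded (A n)" "\<And>n. x \<in> A n"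
  shows "\<not> bounded (\<Inter>n. closure (A n))"
proof
  assume "bounded (\<Inter>n. closure (A n))"
  then obtain r where r: "0 < r" "(\<Inter>n. closure (A n)) \<subseteq> ball x r"
    using bounded_subset_ballD by blast
  have "sphere x r = cball x r \<inter> - ball x r" by auto
  then have "compact (sphere x r)"
    using compact_Int_closed[OF compact_cball[of r] closed_Compl[OF open_ball]] by simp
  moreover have "A n \<inter> sphere x r \<noteq> {}" for n
    using assms r(1) by (intro connected_unbounded_meets_sphere) auto
  ultimately have "sphere x r \<inter> (\<Inter>n. closure (A n)) \<noteq> {}"
    using assms(2) compact_meets_Inter_closure_decseq by blast
  with r(2) show False by auto
qed

lemma closure_subset_thicken:
  assumes "0 \<le> e"
  shows "closure A \<subseteq> thicken A e"
proof
  fix y assume "y \<in> closure A"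
  then have "A \<noteq> {}" by auto
  with \<open>y \<in> closure A\<close> have "infdist y A = 0" by (simp add: in_closure_iff_infdist_zero)
  with assms show "y \<in> thicken A e" by (simp add: thicken_def)
qed

theorem mainTheorem7:
  fixes A :: "nat \<Rightarrow> 'a::real_normed_vector set"
  assumes findim: "\<exists>B. finite B \<and> span B = (UNIV :: 'a set)"
    and nested: "\<And>n. A (Suc n) \<subseteq> A n"
    and unbdd: "\<And>n. \<not> bounded (A n)"
    and conn: "\<And>n. connected (A n)"
  shows "(\<Inter>n. A n) = {} \<or> (\<forall>e>0. \<not> bounded (\<Inter>n. thicken (A n) e))"
proof (cases "(\<Inter>n. A n) = {}")
  case False
  then obtain x where x: "\<And>n. x \<in> A n" by blast
  obtain B :: "'a set" where "finite B" "span B = UNIV" using findim by blast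
  have "decseq A" using nested by (simp add: decseq_Suc_iff)
  then have "\<not> bounded (\<Inter>n. closure (A n))"
    by (rule unbounded_Inter_closure_nested_connected[OF
          compact_cball_finite_span[OF \<open>finite B\<close> \<open>span B = UNIV\<close>] _ conn unbdd x])
  moreover have "(\<Inter>n. closure (A n)) \<subseteq> (\<Inter>n. thicken (A n) e)" if "0 < e" for e
    using closure_subset_thicken[OF less_imp_le[OF that]] by blast
  ultimately show ?thesis
    by (metis bounded_subset)
qed simp

end
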